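(* Under the injective homomorphism $\psi\colon\mathrm{GD}^!\langle X\rangle\to\mathrm{ComDer}\langle X,d\rangle$ ($\psi(x)=x$, $\psi(f*g)=\psi(f)\psi(g)$, $\psi(f\star g)=d(\psi(f))\psi(g)$), the image of $\mathrm{GD}^!\langle X\rangle$ has as a linear basis the set of all monomials of $\mathrm{ComDer}\langle X,d\rangle$ (commutative monomials in the letters $d^s(x)$, $s\ge0$, $x\in X$) of weight $\le -1$.
   Context: $\mathrm{ComDer}\langle X,d\rangle$ is the free associative commutative algebra with one derivation $d$ generated by $X$, i.e. the polynomial algebra in the variables $d^s(x)$. The weight of its monomials is defined by $\mathrm{wt}(x)=-1$ for $x\in X$, $\mathrm{wt}(uv)=\mathrm{wt}(u)+\mathrm{wt}(v)$, $\mathrm{wt}(d(u))=\mathrm{wt}(u)+1$. A $\mathrm{GD}^!$-algebra is a vector space with two bilinear operations $*$ and $\star$ such that $*$ is associative and commutative, and $(x\star y)\star z-x\star(y\star z)=(x\star z)\star y-x\star(z\star y)$, $x\star(y\star z)=y\star(x\star z)$, $x\star(y*z)=(x\star y)*z$, $x\star(y*z)+y\star(x*z)=(x*y)\star z$; $\mathrm{GD}^!\langle X\rangle$ is the free one on $X$. *)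

theory Defs
  imports Complex_Main "HOL-Library.Multiset" "HOL-Library.Poly_Mapping"
begin

text \<open>Letters of ComDer: a pair (x, s) stands for d^s(x).\<close>

type_synonym 'x cd_monomial = "('x \<times> nat) multiset"
type_synonym ('x, 'k) comder = "'x cd_monomial \<Rightarrow>\<^sub>0 'k"

definition cd_scale :: "'k::field \<Rightarrow> ('x, 'k) comder \<Rightarrow> ('x, 'k) comder" where
  "cd_scale c p = Poly_Mapping.map (\<lambda>v. c * v) p"

definition cd_mon :: "'x cd_monomial \<Rightarrow> ('x, 'k::field) comder" where
  "cd_mon M = Poly_Mapping.single M 1"

text \<open>The derivation d on a monomial (Leibniz rule, d(d^s x) = d^(s+1) x),
  extended linearly.\<close>
definition cd_der_mon :: "'x cd_monomial \<Rightarrow> ('x, 'k::field) comder" where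
  "cd_der_mon M = (\<Sum>a\<in>#M. cd_mon (M - {#a#} + {#(fst a, Suc (snd a))#}))"

definition cd_der :: "('x, 'k::field) comder \<Rightarrow> ('x, 'k) comder" where
  "cd_der p = (\<Sum>M\<in>Poly_Mapping.keys p. cd_scale (Poly_Mapping.lookup p M) (cd_der_mon M))"

text \<open>Weight: wt(x) = -1, wt(uv) = wt u + wt v, wt(d u) = wt u + 1,
  so wt of d^s(x) is s - 1.\<close>
definition cd_weight :: "'x cd_monomial \<Rightarrow> int" where
  "cd_weight M = (\<Sum>a\<in>#M. int (snd a) - 1)"

text \<open>Nonassociative words in the two operations * (GDMul) and \<star> (GDStar)
  over X; they span the free GD^!-algebra GD^!<X>.\<close>
datatype 'x gd_word = GDGen 'x | GDMul "'x gd_word" "'x gd_word" | GDStar "'x gd_word" "'x gd_word"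

primrec gd_psi :: "'x gd_word \<Rightarrow> ('x, 'k::field) comder" where
  "gd_psi (GDGen x) = cd_mon {#(x, 0)#}"
| "gd_psi (GDMul f g) = gd_psi f * gd_psi g"
| "gd_psi (GDStar f g) = cd_der (gd_psi f) * gd_psi g"

definition gd_image :: "('x, 'k::field) comder set" where
  "gd_image = module.span cd_scale (range gd_psi)"

end

theory Submission
  imports Defs "HOL-Library.Product_Lexorder"
begin

text \<open>
  Generators have weight \<open>-1\<close>, the product adds weights, and \<open>d(\<psi> f) \<psi> g\<close> has weight at most
  \<open>wt f + 1 + wt g \<le> -1\<close>; so by induction every \<open>\<psi> w\<close> is a combination of monomials of weight
  \<open>\<le> -1\<close>, and distinct monomials are linearly independent.

  Conversely, let \<open>M\<close> have weight \<open>\<le> -1\<close>. If the weight is \<open>\<le> -2\<close>, \<open>M\<close> contains a generator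
  \<open>x\<close> and \<open>M = x M'\<close> with \<open>M'\<close> of weight \<open>\<le> -1\<close>. If the weight is \<open>-1\<close> and \<open>M\<close> is not a single
  generator, it contains a letter \<open>d\<^sup>t\<^sup>+\<^sup>1(y)\<close>; the rest of \<open>M\<close> has weight \<open>-t-1\<close>, hence
  contains \<open>t\<close> generators \<open>A\<close> and \<open>M = d\<^sup>t\<^sup>+\<^sup>1(y) A B\<close> with \<open>wt B = -1\<close>. Now
  \<open>d(d\<^sup>t(y) A) B = M + \<Sum>\<close> (terms in which one generator of \<open>A\<close> is differentiated instead),
  and these terms have the same length as \<open>M\<close> but a smaller sum of squared derivation orders.
  Induction on length and then on this sum finishes the proof.
\<close>

section \<open>ComDer as a vector space\<close>

lemma cd_scale_eq_mult: "cd_scale c p = Poly_Mapping.single 0 c * p"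
  unfolding cd_scale_def by (rule mult_map_scale_conv_mult)

interpretation cdm: module "cd_scale :: 'k::field \<Rightarrow> ('x, 'k) comder \<Rightarrow> _"
  by standard (simp_all add: cd_scale_eq_mult algebra_simps mult_single single_add flip: mult.assoc)

lemma lookup_cd_scale: "Poly_Mapping.lookup (cd_scale c p) M = c * Poly_Mapping.lookup p M"
  unfolding cd_scale_def by (simp add: Poly_Mapping.map.rep_eq when_def)

lemma keys_cd_scale: "Poly_Mapping.keys (cd_scale c p) \<subseteq> Poly_Mapping.keys p"
  by (auto simp: in_keys_iff lookup_cd_scale)

lemma cd_scale_cd_mon: "cd_scale c (cd_mon M) = Poly_Mapping.single M c"
  by (simp add: cd_scale_eq_mult cd_mon_def mult_single)

lemma cd_mon_mult: "cd_mon A * cd_mon B = (cd_mon (A + B) :: ('x, 'k::field) comder)"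
  by (simp add: cd_mon_def mult_single)

lemma cd_mon_eq_iff: "(cd_mon A :: ('x, 'k::field) comder) = cd_mon B \<longleftrightarrow> A = B"
proof
  assume "(cd_mon A :: ('x, 'k) comder) = cd_mon B"
  then have "Poly_Mapping.lookup (cd_mon A :: ('x, 'k) comder) A = Poly_Mapping.lookup (cd_mon B) A"
    by simp
  then show "A = B" by (auto simp: cd_mon_def lookup_single when_def split: if_splits)
qed simp

lemma cd_mon_expansion: "p = (\<Sum>M\<in>Poly_Mapping.keys p. cd_scale (Poly_Mapping.lookup p M) (cd_mon M))"
  by (rule poly_mapping_eqI)
     (auto simp: cd_scale_cd_mon lookup_sum lookup_single when_def in_keys_iff)

lemma independent_cd_mon: "cdm.independent (range (cd_mon :: _ \<Rightarrow> ('x, 'k::field) comder))"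
  unfolding cdm.dependent_explicit
proof clarsimp
  fix t and u :: "('x, 'k) comder \<Rightarrow> 'k" and v
  assume t: "finite t" "t \<subseteq> range cd_mon" and s: "(\<Sum>v\<in>t. cd_scale (u v) v) = 0" and v: "v \<in> t"
  from v t obtain M where vM: "v = cd_mon M" by auto
  have "Poly_Mapping.lookup (cd_scale (u v') v') M = (if v' = v then u v' else 0)" if "v' \<in> t" for v'
  proof -
    from that t obtain M' where v': "v' = cd_mon M'" by auto
    show ?thesis
      by (cases "M' = M") (auto simp: v' vM cd_scale_cd_mon lookup_single_not_eq cd_mon_eq_iff)
  qed
  then have "Poly_Mapping.lookup (\<Sum>v\<in>t. cd_scale (u v) v) M = u v"
    by (simp add: lookup_sum t v)
  with s show "u v = 0" by simp
qed

lemma cd_scale_mult_left: "cd_scale c (a * b) = cd_scale c a * b"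
  by (simp add: cd_scale_eq_mult mult.assoc)

lemma cd_scale_mult_right: "cd_scale c (a * b) = a * cd_scale c b"
  by (simp add: cd_scale_eq_mult mult.left_commute)

lemma cd_der_eq_sum_superset:
  assumes "finite K" "Poly_Mapping.keys p \<subseteq> K"
  shows "cd_der p = (\<Sum>M\<in>K. cd_scale (Poly_Mapping.lookup p M) (cd_der_mon M))"
  unfolding cd_der_def
  by (rule sum.mono_neutral_left) (use assms in \<open>auto simp: in_keys_iff\<close>)

lemma cd_der_add: "cd_der (p + q) = cd_der p + cd_der q"
proof -
  let ?K = "Poly_Mapping.keys p \<union> Poly_Mapping.keys q"
  let ?D = "\<lambda>r. \<Sum>M\<in>?K. cd_scale (Poly_Mapping.lookup r M) (cd_der_mon M)"
  have "cd_der (p + q) = ?D (p + q)"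
    by (rule cd_der_eq_sum_superset) (auto dest: subsetD[OF keys_add])
  also have "\<dots> = ?D p + ?D q"
    by (simp add: lookup_add cdm.scale_left_distrib sum.distrib)
  also have "\<dots> = cd_der p + cd_der q"
    by (simp add: cd_der_eq_sum_superset[symmetric])
  finally show ?thesis .
qed

lemma cd_der_scale: "cd_der (cd_scale c p) = cd_scale c (cd_der p)"
proof -
  have "cd_der (cd_scale c p) =
      (\<Sum>M\<in>Poly_Mapping.keys p. cd_scale (Poly_Mapping.lookup (cd_scale c p) M) (cd_der_mon M))"
    by (rule cd_der_eq_sum_superset) (auto simp: keys_cd_scale)
  also have "\<dots> = cd_scale c (cd_der p)"
    by (simp add: lookup_cd_scale cd_der_def cdm.scale_sum_right)
  finally show ?thesis .
qed

lemma cd_der_cd_mon: "cd_der (cd_mon M :: ('x, 'k::field) comder) = cd_der_mon M"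
  by (simp add: cd_der_def cd_mon_def)

definition cd_raise :: "'x cd_monomial \<Rightarrow> 'x \<times> nat \<Rightarrow> 'x cd_monomial" where
  "cd_raise M a = M - {#a#} + {#(fst a, Suc (snd a))#}"

lemma cd_der_mon_eq_sum_raise: "cd_der_mon M = (\<Sum>a\<in>#M. cd_mon (cd_raise M a))"
  by (simp add: cd_der_mon_def cd_raise_def)

lemma cd_raise_eq: "a \<in># M \<Longrightarrow> cd_raise M a = add_mset (fst a, Suc (snd a)) (M - {#a#})"
  by (simp add: cd_raise_def)

lemma cd_raise_add_mset_self: "cd_raise (add_mset a A) a = add_mset (fst a, Suc (snd a)) A"
  by (simp add: cd_raise_def)

section \<open>The image of \<open>\<psi>\<close> is closed under \<open>*\<close> and \<open>\<star>\<close>\<close>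

lemma (in module) span_closed_bilinear:
  assumes "\<And>y. module_hom scale scale (\<lambda>x. f x y)" "\<And>x. module_hom scale scale (f x)"
    and "\<And>x y. x \<in> S \<Longrightarrow> y \<in> S \<Longrightarrow> f x y \<in> span S"
    and "x \<in> span S" "y \<in> span S"
  shows "f x y \<in> span S"
proof -
  have left: "f x' y' \<in> span S" if "x' \<in> span S" "y' \<in> S" for x' y'
  proof -
    have "span S \<subseteq> (\<lambda>x. f x y') -` span S"
      using assms(3)[OF _ \<open>y' \<in> S\<close>]
      by (intro span_minimal module_hom.subspace_vimage[OF assms(1)] subspace_span) auto
    with that show ?thesis by auto
  qed
  have "span S \<subseteq> f x -` span S"
    using left[OF \<open>x \<in> span S\<close>]
    by (intro span_minimal module_hom.subspace_vimage[OF assms(2)] subspace_span) auto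
  with \<open>y \<in> span S\<close> show ?thesis by auto
qed

lemma module_hom_cd_scaleI:
  fixes f :: "('x, 'k::field) comder \<Rightarrow> ('y, 'k) comder"
  assumes "\<And>p q. f (p + q) = f p + f q" "\<And>c p. f (cd_scale c p) = cd_scale c (f p)"
  shows "module_hom cd_scale cd_scale f"
  by (intro module_hom.intro cdm.module_axioms module_hom_axioms.intro assms)

lemma gd_image_bilinear_closed:
  fixes f :: "('x, 'k::field) comder \<Rightarrow> ('x, 'k) comder \<Rightarrow> ('x, 'k) comder"
  assumes "\<And>q. module_hom cd_scale cd_scale (\<lambda>p. f p q)" "\<And>p. module_hom cd_scale cd_scale (f p)"
    and "\<And>v w. f (gd_psi v) (gd_psi w) \<in> gd_image"
    and "p \<in> gd_image" "q \<in> gd_image"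
  shows "f p q \<in> gd_image"
  unfolding gd_image_def
proof (rule cdm.span_closed_bilinear[where f = f])
  show "f x y \<in> cdm.span (range gd_psi)" if "x \<in> range gd_psi" "y \<in> range gd_psi" for x y
    using that assms(3) unfolding gd_image_def by blast
qed (use assms in \<open>simp_all add: gd_image_def\<close>)

lemma gd_image_mult:
  assumes "p \<in> gd_image" "q \<in> gd_image"
  shows "p * q \<in> (gd_image :: ('x, 'k::field) comder set)"
proof (rule gd_image_bilinear_closed[where f = "(*)", OF _ _ _ assms])
  show "gd_psi v * gd_psi w \<in> gd_image" for v w
    using cdm.span_base[OF rangeI, of gd_psi "GDMul v w"] by (simp add: gd_image_def)
qed (intro module_hom_cd_scaleI; simp add: distrib_left distrib_right
    flip: cd_scale_mult_left cd_scale_mult_right)+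

lemma gd_image_der_mult:
  assumes "p \<in> gd_image" "q \<in> gd_image"
  shows "cd_der p * q \<in> (gd_image :: ('x, 'k::field) comder set)"
proof (rule gd_image_bilinear_closed[where f = "\<lambda>p q. cd_der p * q", OF _ _ _ assms])
  show "cd_der (gd_psi v) * gd_psi w \<in> gd_image" for v w
    using cdm.span_base[OF rangeI, of gd_psi "GDStar v w"] by (simp add: gd_image_def)
qed (intro module_hom_cd_scaleI; simp add: cd_der_add cd_der_scale distrib_left distrib_right
    flip: cd_scale_mult_left cd_scale_mult_right)+

lemma gd_image_generator: "(cd_mon {#(x, 0)#} :: ('x, 'k::field) comder) \<in> gd_image"
  using cdm.span_base[OF rangeI, of gd_psi "GDGen x"] by (simp add: gd_image_def)

section \<open>Weights\<close>

lemma cd_weight_empty [simp]: "cd_weight {#} = 0"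
  by (simp add: cd_weight_def)

lemma cd_weight_add_mset [simp]: "cd_weight (add_mset a A) = int (snd a) - 1 + cd_weight A"
  by (simp add: cd_weight_def)

lemma cd_weight_union [simp]: "cd_weight (A + B) = cd_weight A + cd_weight B"
  by (simp add: cd_weight_def)

lemma cd_weight_raise: "a \<in># M \<Longrightarrow> cd_weight (cd_raise M a) = cd_weight M + 1"
  by (subst (2) insert_DiffM[symmetric]) (simp_all add: cd_raise_eq)

lemma size_cd_raise: "a \<in># M \<Longrightarrow> size (cd_raise M a) = size M"
  by (subst (2) insert_DiffM[symmetric]) (simp_all add: cd_raise_eq)

lemma cd_weight_ge_neg_count_generators:
  "cd_weight M \<ge> - int (size (filter_mset (\<lambda>a. snd a = 0) M))"
  by (induction M) auto

lemma cd_weight_generators: "\<forall>a\<in>#M. snd a = 0 \<Longrightarrow> cd_weight M = - int (size M)"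
  by (induction M) auto

definition cd_weight_le :: "int \<Rightarrow> ('x, 'k::field) comder \<Rightarrow> bool" where
  "cd_weight_le n p \<longleftrightarrow> (\<forall>M\<in>Poly_Mapping.keys p. cd_weight M \<le> n)"

lemma cd_weight_le_zero [simp]: "cd_weight_le n 0"
  by (simp add: cd_weight_le_def)

lemma cd_weight_le_add: "cd_weight_le n p \<Longrightarrow> cd_weight_le n q \<Longrightarrow> cd_weight_le n (p + q)"
  unfolding cd_weight_le_def using keys_add[of p q] by auto

lemma cd_weight_le_sum: "(\<And>a. a \<in> A \<Longrightarrow> cd_weight_le n (f a)) \<Longrightarrow> cd_weight_le n (sum f A)"
  by (induction A rule: infinite_finite_induct) (auto intro: cd_weight_le_add)

lemma cd_weight_le_sum_mset:
  "(\<And>a. a \<in># A \<Longrightarrow> cd_weight_le n (f a)) \<Longrightarrow> cd_weight_le n (\<Sum>a\<in>#A. f a)"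
  by (induction A) (auto intro: cd_weight_le_add)

lemma cd_weight_le_mono: "cd_weight_le n p \<Longrightarrow> n \<le> m \<Longrightarrow> cd_weight_le m p"
  by (auto simp: cd_weight_le_def)

lemma cd_weight_le_cd_mon: "cd_weight M \<le> n \<Longrightarrow> cd_weight_le n (cd_mon M)"
  by (simp add: cd_weight_le_def cd_mon_def)

lemma cd_weight_le_mult: "cd_weight_le n p \<Longrightarrow> cd_weight_le m q \<Longrightarrow> cd_weight_le (n + m) (p * q)"
  unfolding cd_weight_le_def using keys_mult[of p q] by (fastforce intro: add_mono)

lemma cd_weight_le_scale: "cd_weight_le n p \<Longrightarrow> cd_weight_le n (cd_scale c p)"
  unfolding cd_weight_le_def using keys_cd_scale[of c p] by auto

lemma cd_weight_le_der_mon: "cd_weight_le (cd_weight M + 1) (cd_der_mon M)"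
  unfolding cd_der_mon_eq_sum_raise
  by (intro cd_weight_le_sum_mset cd_weight_le_cd_mon) (simp add: cd_weight_raise)

lemma cd_weight_le_der:
  assumes "cd_weight_le n p"
  shows "cd_weight_le (n + 1) (cd_der p)"
  unfolding cd_der_def
proof (intro cd_weight_le_sum cd_weight_le_scale)
  fix M assume "M \<in> Poly_Mapping.keys p"
  with assms have "cd_weight M \<le> n" by (simp add: cd_weight_le_def)
  then show "cd_weight_le (n + 1) (cd_der_mon M)"
    by (intro cd_weight_le_mono[OF cd_weight_le_der_mon]) simp
qed

lemma cd_weight_le_gd_psi: "cd_weight_le (-1) (gd_psi w)"
proof (induction w)
  case (GDMul v w)
  then show ?case using cd_weight_le_mult[OF GDMul.IH] by (auto intro: cd_weight_le_mono)
qed (auto intro: cd_weight_le_cd_mon cd_weight_le_mult[OF cd_weight_le_der, of _ _ "-1", simplified])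

lemma in_span_if_cd_weight_le:
  assumes "cd_weight_le n p"
  shows "p \<in> cdm.span {cd_mon M | M. cd_weight M \<le> n}"
proof -
  have "(\<Sum>M\<in>Poly_Mapping.keys p. cd_scale (Poly_Mapping.lookup p M) (cd_mon M))
      \<in> cdm.span {cd_mon M | M. cd_weight M \<le> n}"
    by (rule cdm.span_sum, rule cdm.span_scale, rule cdm.span_base)
       (use assms in \<open>auto simp: cd_weight_le_def\<close>)
  then show ?thesis by (simp only: cd_mon_expansion[symmetric])
qed

section \<open>Monomials of weight \<open>\<le> -1\<close> lie in the image\<close>

definition cd_sq_order :: "'x cd_monomial \<Rightarrow> nat" where
  "cd_sq_order M = (\<Sum>a\<in>#M. snd a ^ 2)"

lemma cd_sq_order_empty [simp]: "cd_sq_order {#} = 0"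
  by (simp add: cd_sq_order_def)

lemma cd_sq_order_add_mset [simp]: "cd_sq_order (add_mset a A) = snd a ^ 2 + cd_sq_order A"
  by (simp add: cd_sq_order_def)

lemma cd_sq_order_union [simp]: "cd_sq_order (A + B) = cd_sq_order A + cd_sq_order B"
  by (simp add: cd_sq_order_def)

lemma cd_sq_order_raise:
  "a \<in># M \<Longrightarrow> cd_sq_order (cd_raise M a) = cd_sq_order M + 2 * snd a + 1"
  by (subst (2) insert_DiffM[symmetric]) (simp_all add: cd_raise_eq power2_eq_square)

lemma cd_sq_order_generators: "\<forall>a\<in>#M. snd a = 0 \<Longrightarrow> cd_sq_order M = 0"
  by (induction M) auto

lemma exists_submultiset_size: "k \<le> size M \<Longrightarrow> \<exists>A. A \<subseteq># M \<and> size A = k"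
proof (induction M arbitrary: k)
  case (add x M)
  show ?case
  proof (cases k)
    case (Suc k')
    with add obtain A where "A \<subseteq># M" "size A = k'" by auto
    with Suc show ?thesis by (intro exI[of _ "add_mset x A"]) auto
  qed auto
qed auto

lemma cd_weight_le_minus2_split:
  assumes "cd_weight M \<le> -2"
  obtains x M' where "M = add_mset (x, 0) M'" "cd_weight M' \<le> -1"
proof -
  have "0 < size (filter_mset (\<lambda>a. snd a = 0) M)"
    using cd_weight_ge_neg_count_generators[of M] assms by linarith
  then obtain a where "a \<in># filter_mset (\<lambda>a. snd a = 0) M"
    by (metis multiset_nonemptyE size_empty less_irrefl)
  then obtain x where "(x, 0) \<in># M"
    by (cases a) auto
  define M' where "M' = M - {#(x, 0)#}"
  have M: "M = add_mset (x, 0) M'" using \<open>(x, 0) \<in># M\<close> by (simp add: M'_def)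
  moreover have "cd_weight M' \<le> -1" using assms by (simp add: M)
  ultimately show ?thesis by (rule that)
qed

lemma cd_weight_minus1_generators:
  assumes "cd_weight M = -1" "\<forall>a\<in>#M. snd a = 0"
  obtains x where "M = {#(x, 0)#}"
proof -
  have "size M = 1" using cd_weight_generators[OF assms(2)] assms(1) by simp
  then obtain a where "M = {#a#}" using size_1_singleton_mset by blast
  with assms(2) show ?thesis by (metis prod.collapse that union_single_eq_member)
qed

text \<open>The letters other than \<open>d\<^sup>t\<^sup>+\<^sup>1(y)\<close> have weight \<open>-t-1\<close>, so at least \<open>t + 1\<close> of them
  are generators.\<close>
lemma cd_weight_minus1_split:
  assumes "cd_weight M = -1" "(y, Suc t) \<in># M"
  obtains A B where "M = add_mset (y, Suc t) (A + B)" "\<forall>a\<in>#A. snd a = 0" "size A = t"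
    "cd_weight B = -1"
proof -
  define R where "R = M - {#(y, Suc t)#}"
  have M: "M = add_mset (y, Suc t) R" using assms(2) by (simp add: R_def)
  then have "cd_weight R = - int t - 1" using assms(1) by simp
  then have "t \<le> size (filter_mset (\<lambda>a. snd a = 0) R)"
    using cd_weight_ge_neg_count_generators[of R] by simp
  then obtain A where A: "A \<subseteq># filter_mset (\<lambda>a. snd a = 0) R" "size A = t"
    using exists_submultiset_size by blast
  then have "A \<subseteq># R" and gens: "\<forall>a\<in>#A. snd a = 0"
    by (auto intro: subset_mset.order_trans multiset_filter_subset dest: mset_subset_eqD)
  define B where "B = R - A"
  have R: "R = A + B" using \<open>A \<subseteq># R\<close> by (simp add: B_def)
  have "cd_weight B = -1"
    using \<open>cd_weight R = _\<close> cd_weight_generators[OF gens] A(2) by (simp add: R)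
  with M R gens A(2) show ?thesis by (intro that) simp_all
qed

lemma gd_image_sum_mset:
  "(\<And>a. a \<in># A \<Longrightarrow> f a \<in> gd_image) \<Longrightarrow> (\<Sum>a\<in>#A. f a) \<in> (gd_image :: ('x, 'k::field) comder set)"
  unfolding gd_image_def by (induction A) (auto intro: cdm.span_add cdm.span_zero)

text \<open>With \<open>u = d\<^sup>t(y) A\<close>, the Leibniz rule gives \<open>d(u) B = M + \<Sum>\<^sub>a\<^sub>\<in>\<^sub>A (u with a raised) B\<close>,
  and raising a generator instead of \<open>d\<^sup>t(y)\<close> lowers the sum of squared orders.\<close>
lemma cd_mon_in_gd_image_by_derivation:
  fixes M :: "'x cd_monomial"
  assumes M: "M = add_mset (y, Suc t) (A + B)" and A: "\<forall>a\<in>#A. snd a = 0" "size A = t"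
    and B: "cd_weight B = -1"
    and IH: "\<And>N. (size N, cd_sq_order N) < (size M, cd_sq_order M) \<Longrightarrow> cd_weight N \<le> -1 \<Longrightarrow>
      (cd_mon N :: ('x, 'k::field) comder) \<in> gd_image"
  shows "(cd_mon M :: ('x, 'k) comder) \<in> gd_image"
proof -
  define u where "u = add_mset (y, t) A"
  have wt_u: "cd_weight u = -1" using A by (simp add: u_def cd_weight_generators)
  have "B \<noteq> {#}" using B by auto
  then have "size u < size M" by (simp add: M u_def A nonempty_has_size)
  with wt_u have u_img: "(cd_mon u :: ('x, 'k) comder) \<in> gd_image" using IH by simp
  have B_img: "(cd_mon B :: ('x, 'k) comder) \<in> gd_image" using IH B by (simp add: M)
  have raised_img: "(cd_mon (cd_raise u a + B) :: ('x, 'k) comder) \<in> gd_image" if "a \<in># A" for a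
  proof (rule IH)
    have a: "a \<in># u" "snd a = 0" using that A by (auto simp: u_def)
    have "0 < t" using that A(2) by (metis gr0I size_eq_0_iff_empty empty_iff set_mset_empty)
    then have "cd_sq_order (cd_raise u a + B) < cd_sq_order M"
      using a by (simp add: cd_sq_order_raise M u_def cd_sq_order_generators[OF A(1)] power2_eq_square)
    then show "(size (cd_raise u a + B), cd_sq_order (cd_raise u a + B)) < (size M, cd_sq_order M)"
      using a by (simp add: size_cd_raise M u_def)
    show "cd_weight (cd_raise u a + B) \<le> -1" using a wt_u B by (simp add: cd_weight_raise)
  qed
  have "cd_der (cd_mon u) * cd_mon B = cd_mon M + (\<Sum>a\<in>#A. cd_mon (cd_raise u a + B) :: ('x, 'k) comder)"
    by (simp add: cd_der_cd_mon cd_der_mon_eq_sum_raise cd_raise_add_mset_self M cd_mon_mult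
        distrib_right sum_mset_distrib_right u_def)
  then have "cd_mon M = cd_der (cd_mon u) * cd_mon B - (\<Sum>a\<in>#A. cd_mon (cd_raise u a + B) :: ('x, 'k) comder)"
    by simp
  also have "\<dots> \<in> gd_image"
    using gd_image_der_mult[OF u_img B_img] gd_image_sum_mset[OF raised_img]
    unfolding gd_image_def by (rule cdm.span_diff)
  finally show ?thesis .
qed

lemma cd_mon_in_gd_image:
  "cd_weight M \<le> -1 \<Longrightarrow> (cd_mon M :: ('x, 'k::field) comder) \<in> gd_image"
proof (induction "(size M, cd_sq_order M)" arbitrary: M rule: less_induct)
  case less
  consider "cd_weight M \<le> -2" | "cd_weight M = -1" "\<forall>a\<in>#M. snd a = 0"
    | y t where "cd_weight M = -1" "(y, Suc t) \<in># M"
  proof -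
    have "(\<forall>a\<in>#M. snd a = 0) \<or> (\<exists>y t. (y, Suc t) \<in># M)"
      by (metis not0_implies_Suc prod.collapse)
    moreover have "cd_weight M \<le> -2 \<or> cd_weight M = -1" using less.prems by linarith
    ultimately show thesis using that by blast
  qed
  then show ?case
  proof cases
    case 1
    then obtain x M' where "M = add_mset (x, 0) M'" "cd_weight M' \<le> -1"
      by (rule cd_weight_le_minus2_split)
    moreover from this have "(cd_mon M' :: ('x, 'k) comder) \<in> gd_image"
      using less.hyps[of M'] by simp
    ultimately show ?thesis
      using gd_image_mult[OF gd_image_generator] by (metis cd_mon_mult add_mset_add_single add.commute)
  next
    case 2
    then show ?thesis by (metis cd_weight_minus1_generators gd_image_generator)
  next
    case 3
    then obtain A B where "M = add_mset (y, Suc t) (A + B)" "\<forall>a\<in>#A. snd a = 0" "size A = t"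
      "cd_weight B = -1"
      by (rule cd_weight_minus1_split)
    then show ?thesis by (rule cd_mon_in_gd_image_by_derivation) (use less.hyps in blast)
  qed
qed

theorem mainTheorem9:
  shows "module.span (cd_scale :: 'k::field_char_0 \<Rightarrow> _) {cd_mon M | M :: 'x cd_monomial. cd_weight M \<le> -1}
           = (gd_image :: ('x, 'k) comder set)
         \<and> \<not> module.dependent (cd_scale :: 'k \<Rightarrow> _) {cd_mon M | M :: 'x cd_monomial. cd_weight M \<le> -1}"
proof
  let ?W = "{cd_mon M | M :: 'x cd_monomial. cd_weight M \<le> -1} :: ('x, 'k) comder set"
  have "cdm.span ?W \<subseteq> gd_image"
  proof (rule cdm.span_minimal)
    show "?W \<subseteq> gd_image" using cd_mon_in_gd_image by blast
    show "cdm.subspace (gd_image :: ('x, 'k) comder set)"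
      unfolding gd_image_def by (rule cdm.subspace_span)
  qed
  moreover have "gd_image \<subseteq> cdm.span ?W"
    unfolding gd_image_def
    by (rule cdm.span_minimal) (auto intro: in_span_if_cd_weight_le cd_weight_le_gd_psi)
  ultimately show "cdm.span ?W = gd_image" by blast
  show "\<not> cdm.dependent ?W"
    by (rule cdm.independent_mono[OF independent_cd_mon]) blast
qed

end
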